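(* Let $G$ be a countable amenable group and $\{W_n\}$ an increasing sequence of finite subsets of $G$ with $1_G\in W_n$ such that (1) $\{W_n\}$ is a Følner sequence, and (2) for some constant $C$, each $W_n$ is individually $C$-filling. Then there exists a subsequence $\{W_{n(i)}\}$ which is filling.
   Context: Følner: $|W_n\triangle gW_n|/|W_n|\to0$ for every $g\in G$. A sequence $\{V_{n(i)}f_i\}_{i=1}^I$ of right translates of members of a sequence $\{V_n\}$ is incremental if $n(1)\ge\dots\ge n(I)$ and $f_i\notin\bigcup_{j<i}V_{n(j)}f_j$. A sequence $\{V_n\}$ with $1_G\in V_n$ is filling if for some $c>0$ every incremental sequence satisfies $|\bigcup V_{n(i)}f_i|\ge c\sum|V_{n(i)}f_i|$. A finite set $W\ni 1_G$ is individually $C$-filling if for every sequence $\{Wf_i\}$ with $f_i\notin\bigcup_{j<i}Wf_j$ one has $|\bigcup Wf_i|\ge C\sum|Wf_i|$. *)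

theory Defs
  imports "HOL-Algebra.Coset" Complex_Main "HOL-Library.Countable_Set"
begin

text \<open>Left translate g W is l_coset (g <# W); right translate V f is r_coset (V #> f).\<close>

definition folner_seq :: "('a, 'b) monoid_scheme \<Rightarrow> (nat \<Rightarrow> 'a set) \<Rightarrow> bool" where
  "folner_seq G W \<longleftrightarrow>
     (\<forall>n. finite (W n) \<and> W n \<noteq> {} \<and> W n \<subseteq> carrier G) \<and>
     (\<forall>g\<in>carrier G.
        (\<lambda>n. real (card ((W n - (g <#\<^bsub>G\<^esub> W n)) \<union> ((g <#\<^bsub>G\<^esub> W n) - W n))) / real (card (W n))) \<longlonglongrightarrow> 0)"

definition amenable_group :: "('a, 'b) monoid_scheme \<Rightarrow> bool" where
  "amenable_group G \<longleftrightarrow> (\<exists>W. folner_seq G W)"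

definition incremental ::
  "('a, 'b) monoid_scheme \<Rightarrow> (nat \<Rightarrow> 'a set) \<Rightarrow> nat \<Rightarrow> (nat \<Rightarrow> nat) \<Rightarrow> (nat \<Rightarrow> 'a) \<Rightarrow> bool" where
  "incremental G V I nn f \<longleftrightarrow>
     (\<forall>i j. i \<le> j \<longrightarrow> j < I \<longrightarrow> nn j \<le> nn i) \<and>
     (\<forall>i<I. f i \<in> carrier G \<and> f i \<notin> (\<Union>j<i. V (nn j) #>\<^bsub>G\<^esub> f j))"

definition filling :: "('a, 'b) monoid_scheme \<Rightarrow> (nat \<Rightarrow> 'a set) \<Rightarrow> bool" where
  "filling G V \<longleftrightarrow>
     (\<forall>n. \<one>\<^bsub>G\<^esub> \<in> V n) \<and>
     (\<exists>c::real. c > 0 \<and>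
        (\<forall>I nn f. incremental G V I nn f \<longrightarrow>
           real (card (\<Union>i<I. V (nn i) #>\<^bsub>G\<^esub> f i))
             \<ge> c * (\<Sum>i<I. real (card (V (nn i) #>\<^bsub>G\<^esub> f i)))))"

definition individually_filling :: "('a, 'b) monoid_scheme \<Rightarrow> real \<Rightarrow> 'a set \<Rightarrow> bool" where
  "individually_filling G C W \<longleftrightarrow>
     finite W \<and> \<one>\<^bsub>G\<^esub> \<in> W \<and>
     (\<forall>(I::nat) f. (\<forall>i<I. f i \<in> carrier G \<and> f i \<notin> (\<Union>j<i. W #>\<^bsub>G\<^esub> f j)) \<longrightarrow>
        real (card (\<Union>i<I. W #>\<^bsub>G\<^esub> f i))
          \<ge> C * (\<Sum>i<I. real (card (W #>\<^bsub>G\<^esub> f i))))"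

end

theory Submission
  imports Defs
begin

text \<open>For finite \<open>A\<close>, \<open>B\<close> let \<open>\<partial>\<^sub>A B\<close> (\<open>outer_boundary\<close>) be the set of \<open>x \<notin> B\<close> whose right translate
  \<open>A x\<close> meets \<open>B\<close>. The Folner property makes \<open>|\<partial>\<^sub>A W\<^sub>n| / |W\<^sub>n|\<close> tend to 0 for each fixed \<open>A\<close>,
  so one can pick a subsequence \<open>V\<^sub>k\<close> of \<open>W\<close> with \<open>\<Sum>\<^sub>l\<^sub><\<^sub>k |\<partial>\<^bsub>V\<^sub>l\<^esub> V\<^sub>k| |V\<^sub>l| \<le> |V\<^sub>k| / 2\<close>.
  In an incremental family \<open>V\<^bsub>n(i)\<^esub> f\<^sub>i\<close> call \<open>i\<close> good if its translate misses every earlier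
  translate of a different shape. A bad translate meets an earlier \<open>V\<^bsub>n(j)\<^esub> f\<^sub>j\<close> with
  \<open>n(j) > n(i)\<close> without containing \<open>f\<^sub>i\<close>, which forces \<open>f\<^sub>i \<in> (\<partial>\<^bsub>V\<^bsub>n(i)\<^esub>\<^esub> V\<^bsub>n(j)\<^esub>) f\<^sub>j\<close>; since the \<open>f\<^sub>i\<close> are
  distinct, the bad indices carry at most half of \<open>\<Sum> |V\<^bsub>n(i)\<^esub>|\<close>. Good translates of different
  shapes are disjoint and those of one shape are \<open>C\<close>-filling, so the union of the family has
  at least \<open>C/2 \<cdot> \<Sum> |V\<^bsub>n(i)\<^esub> f\<^sub>i|\<close> elements.\<close>

lemma sum_UN_le:
  fixes g :: "'a \<Rightarrow> 'b::ordered_comm_monoid_add"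
  assumes "finite A" "\<And>a. a \<in> A \<Longrightarrow> finite (B a)" "\<And>x. 0 \<le> g x"
  shows "sum g (\<Union>a\<in>A. B a) \<le> (\<Sum>a\<in>A. sum g (B a))"
  using assms(1,2)
proof (induction A rule: finite_induct)
  case (insert a A)
  then have "finite (\<Union>a\<in>A. B a)" by blast
  have "sum g (B a \<union> (\<Union>a\<in>A. B a)) = sum g (B a) + sum g ((\<Union>a\<in>A. B a) - B a)"
    using insert.prems \<open>finite (\<Union>a\<in>A. B a)\<close>
    by (subst Un_Diff_cancel[symmetric], subst sum.union_disjoint) auto
  also have "\<dots> \<le> sum g (B a) + sum g (\<Union>a\<in>A. B a)"
    using \<open>finite (\<Union>a\<in>A. B a)\<close> assms(3) by (intro add_left_mono sum_mono2) auto
  also have "\<dots> \<le> sum g (B a) + (\<Sum>a\<in>A. sum g (B a))"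
    using insert by (intro add_left_mono) auto
  finally show ?case using insert.hyps by simp
qed simp

lemma finite_l_coset: "finite B \<Longrightarrow> finite (a <#\<^bsub>G\<^esub> B)"
  unfolding l_coset_def by simp

lemma finite_r_coset: "finite B \<Longrightarrow> finite (B #>\<^bsub>G\<^esub> a)"
  unfolding r_coset_def by simp

lemma (in group) card_r_coset: "H \<subseteq> carrier G \<Longrightarrow> a \<in> carrier G \<Longrightarrow> card (H #> a) = card H"
  by (metis card_rcosets_equal rcosetsI)

definition outer_boundary :: "('a, 'b) monoid_scheme \<Rightarrow> 'a set \<Rightarrow> 'a set \<Rightarrow> 'a set" where
  "outer_boundary G A B = {x \<in> carrier G. x \<notin> B \<and> (\<exists>a\<in>A. a \<otimes>\<^bsub>G\<^esub> x \<in> B)}"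

lemma outer_boundary_subset_carrier: "outer_boundary G A B \<subseteq> carrier G"
  unfolding outer_boundary_def by blast

lemma outer_boundary_mono: "A \<subseteq> A' \<Longrightarrow> outer_boundary G A B \<subseteq> outer_boundary G A' B"
  unfolding outer_boundary_def by blast

lemma (in group) outer_boundary_subset:
  assumes "A \<subseteq> carrier G"
  shows "outer_boundary G A B \<subseteq> (\<Union>a\<in>A. (inv a <# B) - B)"
proof
  fix x assume "x \<in> outer_boundary G A B"
  then obtain a where a: "a \<in> A" "a \<otimes> x \<in> B" and x: "x \<in> carrier G" "x \<notin> B"
    by (auto simp: outer_boundary_def)
  have "a \<in> carrier G" using a(1) assms by blast
  then have "x = inv a \<otimes> (a \<otimes> x)" using x(1) by (simp add: m_assoc[symmetric])
  then have "x \<in> inv a <# B" using a(2) unfolding l_coset_def by blast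
  then show "x \<in> (\<Union>a\<in>A. (inv a <# B) - B)" using a(1) x(2) by blast
qed

lemma (in group) finite_outer_boundary:
  "A \<subseteq> carrier G \<Longrightarrow> finite A \<Longrightarrow> finite B \<Longrightarrow> finite (outer_boundary G A B)"
  using outer_boundary_subset by (meson finite_Diff finite_UN_I finite_l_coset finite_subset)

lemma (in group) card_outer_boundary_le:
  assumes "A \<subseteq> carrier G" "finite A" "finite B"
  shows "card (outer_boundary G A B) \<le> (\<Sum>a\<in>A. card ((B - (inv a <# B)) \<union> ((inv a <# B) - B)))"
proof -
  have "card (outer_boundary G A B) \<le> card (\<Union>a\<in>A. (inv a <# B) - B)"
    using assms outer_boundary_subset by (intro card_mono) (auto simp: finite_l_coset)
  also have "\<dots> \<le> (\<Sum>a\<in>A. card ((inv a <# B) - B))"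
    using assms(2) by (rule card_UN_le)
  also have "\<dots> \<le> (\<Sum>a\<in>A. card ((B - (inv a <# B)) \<union> ((inv a <# B) - B)))"
    using assms(3) by (intro sum_mono card_mono) (auto simp: finite_l_coset)
  finally show ?thesis .
qed

lemma (in group) rcos_meet_imp_outer_boundary:
  assumes "A \<subseteq> carrier G" "B \<subseteq> carrier G" "x \<in> carrier G" "y \<in> carrier G"
    and "(A #> x) \<inter> (B #> y) \<noteq> {}" "x \<notin> B #> y"
  shows "x \<in> outer_boundary G A B #> y"
proof -
  obtain a b where a: "a \<in> A" and b: "b \<in> B" and ab: "a \<otimes> x = b \<otimes> y"
    using assms(5) unfolding r_coset_def by auto
  define z where "z = x \<otimes> inv y"
  have z: "z \<in> carrier G" "x = z \<otimes> y" using assms(3,4) by (auto simp: z_def m_assoc)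
  have ac: "a \<in> carrier G" and bc: "b \<in> carrier G" using a b assms(1,2) by auto
  have "a \<otimes> z = (a \<otimes> x) \<otimes> inv y" using ac assms(3,4) by (simp add: z_def m_assoc)
  also have "\<dots> = b" using ab bc assms(4) by (simp add: m_assoc)
  finally have "a \<otimes> z = b" .
  moreover have "z \<notin> B" using assms(6) z(2) unfolding r_coset_def by blast
  ultimately have "z \<in> outer_boundary G A B" using a b z(1) unfolding outer_boundary_def by blast
  then show ?thesis using z(2) unfolding r_coset_def by blast
qed

lemma (in group) card_outer_boundary_times_card_mono:
  assumes "A \<subseteq> A'" "A' \<subseteq> carrier G" "finite A'" "finite B"
  shows "real (card (outer_boundary G A B)) * real (card A)
    \<le> real (card (outer_boundary G A' B)) * real (card A')"
proof -
  have "card (outer_boundary G A B) \<le> card (outer_boundary G A' B)"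
    using assms by (intro card_mono finite_outer_boundary outer_boundary_mono)
  moreover have "card A \<le> card A'" using assms by (intro card_mono)
  ultimately show ?thesis by (intro mult_mono) auto
qed

lemma (in group) folner_seq_eventually_small_outer_boundary:
  assumes "folner_seq G W" "finite A" "A \<subseteq> carrier G" "\<epsilon> > 0"
  shows "\<forall>\<^sub>F n in sequentially. real (card (outer_boundary G A (W n))) \<le> \<epsilon> * real (card (W n))"
proof -
  define r where "r a n = real (card ((W n - (inv a <# W n)) \<union> ((inv a <# W n) - W n))) / real (card (W n))"
    for a n
  have W: "finite (W n)" "W n \<noteq> {}" for n
    using assms(1) by (auto simp: folner_seq_def)
  have "r a \<longlonglongrightarrow> 0" if "a \<in> A" for a
    using assms(1,3) that unfolding folner_seq_def r_def by blast
  then have "(\<lambda>n. \<Sum>a\<in>A. r a n) \<longlonglongrightarrow> 0" by (rule tendsto_null_sum)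
  then have "\<forall>\<^sub>F n in sequentially. (\<Sum>a\<in>A. r a n) < \<epsilon>" using assms(4) by (rule order_tendstoD(2))
  then show ?thesis
  proof eventually_elim
    case (elim n)
    have pos: "real (card (W n)) > 0" using W by (simp add: card_gt_0_iff)
    have "real (card (outer_boundary G A (W n))) \<le> real (card (W n)) * (\<Sum>a\<in>A. r a n)"
      using card_outer_boundary_le[OF assms(3,2) W(1)] pos
      by (simp add: r_def sum_distrib_left flip: of_nat_sum)
    also have "\<dots> \<le> \<epsilon> * real (card (W n))" using elim pos by simp
    finally show ?case .
  qed
qed

lemma (in group) folner_seq_exists_later_small_outer_boundary:
  assumes "folner_seq G W" "c > 0"
  shows "\<exists>y>x. c * (real (card (outer_boundary G (W x) (W y))) * real (card (W x))) \<le> real (card (W y))"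
proof -
  have W: "finite (W x)" "W x \<subseteq> carrier G"
    using assms(1) by (auto simp: folner_seq_def)
  define a where "a = real (card (W x))"
  define \<epsilon> where "\<epsilon> = 1 / (c * (a + 1))"
  have a: "a \<ge> 0" by (simp add: a_def)
  have "\<forall>\<^sub>F y in sequentially. x < y \<and> real (card (outer_boundary G (W x) (W y))) \<le> \<epsilon> * real (card (W y))"
    using eventually_gt_at_top folner_seq_eventually_small_outer_boundary[OF assms(1) W]
    by (rule eventually_conj) (use assms(2) a in \<open>simp add: \<epsilon>_def\<close>)
  then obtain y where y: "x < y" "real (card (outer_boundary G (W x) (W y))) \<le> \<epsilon> * real (card (W y))"
    using eventually_happens'[OF sequentially_bot] by blast
  have "c * (real (card (outer_boundary G (W x) (W y))) * a) \<le> c * (\<epsilon> * real (card (W y)) * a)"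
    using y(2) assms(2) a by (intro mult_left_mono mult_right_mono) auto
  also have "\<dots> = real (card (W y)) * (a / (a + 1))"
  proof -
    have "a + 1 \<noteq> 0" "c \<noteq> 0" using assms(2) a by linarith+
    then show ?thesis by (simp add: \<epsilon>_def divide_simps)
  qed
  also have "\<dots> \<le> real (card (W y))"
    using a by (intro mult_left_le) auto
  finally show ?thesis using y(1) unfolding a_def by blast
qed

definition small_outer_boundaries :: "('a, 'b) monoid_scheme \<Rightarrow> (nat \<Rightarrow> 'a set) \<Rightarrow> bool" where
  "small_outer_boundaries G V \<longleftrightarrow> (\<forall>k.
     (\<Sum>l<k. real (card (outer_boundary G (V l) (V k))) * real (card (V l))) \<le> real (card (V k)) / 2)"

lemma (in group) folner_subseq_small_outer_boundaries:
  assumes "folner_seq G W" "incseq W"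
  obtains \<sigma> where "strict_mono \<sigma>" "small_outer_boundaries G (W \<circ> \<sigma>)"
proof -
  have W: "finite (W n)" "W n \<subseteq> carrier G" for n
    using assms(1) by (auto simp: folner_seq_def)
  \<comment> \<open>The factor \<open>k + 1\<close> pays for the \<open>k\<close> summands of \<open>small_outer_boundaries\<close>: since \<open>W\<close> is
    increasing, each of them is dominated by the one with the latest predecessor.\<close>
  define small where "small k x y \<longleftrightarrow> x < y \<and>
    real (Suc k) * (real (card (outer_boundary G (W x) (W y))) * real (card (W x))) \<le> real (card (W y)) / 2"
    for k x y
  have half: "s * t \<le> b / 2" if "2 * s * t \<le> b" for s t b :: real
    using that by simp
  have "\<exists>y. small k x y" for k x
  proof -
    obtain y where "x < y"
      "2 * real (Suc k) * (real (card (outer_boundary G (W x) (W y))) * real (card (W x))) \<le> real (card (W y))"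
      using folner_seq_exists_later_small_outer_boundary[OF assms(1), of "2 * real (Suc k)" x] by auto
    then show ?thesis unfolding small_def using half by blast
  qed
  then obtain \<sigma> where \<sigma>: "\<And>k. small k (\<sigma> k) (\<sigma> (Suc k))"
    using dependent_nat_choice[of "\<lambda>_ _. True" small] by blast
  have mono: "strict_mono \<sigma>" using \<sigma> by (simp add: strict_mono_Suc_iff small_def)
  have "(\<Sum>l<k. real (card (outer_boundary G (W (\<sigma> l)) (W (\<sigma> k)))) * real (card (W (\<sigma> l))))
      \<le> real (card (W (\<sigma> k))) / 2" for k
  proof (cases k)
    case (Suc m)
    have "W (\<sigma> l) \<subseteq> W (\<sigma> m)" if "l < Suc m" for l
      using that assms(2) mono by (simp add: incseqD strict_mono_less_eq)
    then have "(\<Sum>l<Suc m. real (card (outer_boundary G (W (\<sigma> l)) (W (\<sigma> (Suc m))))) * real (card (W (\<sigma> l))))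
      \<le> (\<Sum>l<Suc m. real (card (outer_boundary G (W (\<sigma> m)) (W (\<sigma> (Suc m))))) * real (card (W (\<sigma> m))))"
      using W by (intro sum_mono card_outer_boundary_times_card_mono) auto
    also have "\<dots> \<le> real (card (W (\<sigma> (Suc m)))) / 2"
      using \<sigma>[of m] by (simp add: small_def)
    finally show ?thesis using Suc by simp
  qed simp
  then have "small_outer_boundaries G (W \<circ> \<sigma>)" by (simp add: small_outer_boundaries_def)
  with mono show ?thesis by (rule that)
qed

lemma individually_filling_finite_index:
  fixes S :: "'i::linorder set"
  assumes "individually_filling G C W" "finite S"
    and "\<And>i. i \<in> S \<Longrightarrow> f i \<in> carrier G \<and> f i \<notin> (\<Union>j\<in>{j\<in>S. j < i}. W #>\<^bsub>G\<^esub> f j)"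
  shows "C * (\<Sum>i\<in>S. real (card (W #>\<^bsub>G\<^esub> f i))) \<le> real (card (\<Union>i\<in>S. W #>\<^bsub>G\<^esub> f i))"
proof -
  define xs where "xs = sorted_list_of_set S"
  have set_xs: "set xs = S" and "distinct xs" and sorted_xs: "sorted_wrt (<) xs"
    using assms(2) by (auto simp: xs_def)
  then have bij: "bij_betw ((!) xs) {..<length xs} S"
    using bij_betw_nth by blast
  define g where "g k = f (xs ! k)" for k
  have "g i \<in> carrier G \<and> g i \<notin> (\<Union>j<i. W #>\<^bsub>G\<^esub> g j)" if i: "i < length xs" for i
  proof -
    have "xs ! i \<in> S" using i set_xs nth_mem by blast
    moreover have "xs ! j \<in> {j\<in>S. j < xs ! i}" if "j < i" for j
      using that i set_xs sorted_wrt_nth_less[OF sorted_xs] by auto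
    ultimately show ?thesis using assms(3) unfolding g_def by blast
  qed
  then have "C * (\<Sum>i<length xs. real (card (W #>\<^bsub>G\<^esub> g i))) \<le> real (card (\<Union>i<length xs. W #>\<^bsub>G\<^esub> g i))"
    using assms(1) unfolding individually_filling_def by blast
  moreover have "(\<Union>i<length xs. W #>\<^bsub>G\<^esub> g i) = (\<Union>i\<in>S. W #>\<^bsub>G\<^esub> f i)"
    unfolding g_def using bij_betw_imp_surj_on[OF bij] by (metis image_image)
  moreover have "(\<Sum>i<length xs. real (card (W #>\<^bsub>G\<^esub> g i))) = (\<Sum>i\<in>S. real (card (W #>\<^bsub>G\<^esub> f i)))"
    unfolding g_def using sum.reindex_bij_betw[OF bij] by simp
  ultimately show ?thesis by simp
qed

locale incremental_translates = group G for G (structure) +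
  fixes V :: "nat \<Rightarrow> 'a set" and I :: nat and n :: "nat \<Rightarrow> nat" and f :: "nat \<Rightarrow> 'a"
  assumes finite_V: "finite (V k)" and V_carrier: "V k \<subseteq> carrier G" and one_in_V: "\<one> \<in> V k"
    and incremental: "incremental G V I n f"
begin

lemma n_antimono: "i \<le> j \<Longrightarrow> j < I \<Longrightarrow> n j \<le> n i"
  using incremental unfolding incremental_def by blast

lemma f_carrier: "i < I \<Longrightarrow> f i \<in> carrier G"
  using incremental unfolding incremental_def by blast

lemma f_fresh: "j < i \<Longrightarrow> i < I \<Longrightarrow> f i \<notin> V (n j) #> f j"
  using incremental unfolding incremental_def by blast

lemma inj_on_f: "inj_on f {..<I}"
proof (rule linorder_inj_onI')
  fix j i assume "j \<in> {..<I}" "i \<in> {..<I}" "j < i"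
  moreover have "f j \<in> V (n j) #> f j"
    using one_in_V f_carrier \<open>j \<in> {..<I}\<close> unfolding r_coset_def by force
  ultimately show "f j \<noteq> f i" using f_fresh by force
qed

definition good :: "nat set" where
  "good = {i. i < I \<and> (\<forall>j<i. n j \<noteq> n i \<longrightarrow> (V (n i) #> f i) \<inter> (V (n j) #> f j) = {})}"

lemma good_translates_disjoint:
  assumes "i \<in> good" "j \<in> good" "n i \<noteq> n j"
  shows "(V (n i) #> f i) \<inter> (V (n j) #> f j) = {}"
  using assms by (cases i j rule: linorder_cases) (auto simp: good_def)

lemma not_good_in_outer_boundary:
  assumes "i < I" "i \<notin> good"
  obtains j where "j < I" "n i < n j" "f i \<in> outer_boundary G (V (n i)) (V (n j)) #> f j"
proof -
  obtain j where j: "j < i" "n j \<noteq> n i" and meet: "(V (n i) #> f i) \<inter> (V (n j) #> f j) \<noteq> {}"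
    using assms unfolding good_def by blast
  have "j < I" using j(1) assms(1) by simp
  moreover have "n i < n j" using n_antimono[of j i] j assms(1) by simp
  moreover have "f i \<in> outer_boundary G (V (n i)) (V (n j)) #> f j"
    using V_carrier f_carrier assms(1) \<open>j < I\<close> meet f_fresh[OF j(1) assms(1)]
    by (intro rcos_meet_imp_outer_boundary) auto
  ultimately show thesis by (rule that)
qed

lemma sum_card_not_good_le_half:
  assumes "small_outer_boundaries G V"
  shows "(\<Sum>i\<in>{..<I} - good. real (card (V (n i)))) \<le> (\<Sum>i<I. real (card (V (n i)))) / 2"
proof -
  define v where "v i = real (card (V (n i)))" for i
  define B where "B j l = {i. i < I \<and> n i = l \<and> f i \<in> outer_boundary G (V l) (V (n j)) #> f j}" for j l
  have finite_B: "finite (B j l)" for j l by (simp add: B_def)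
  have "{..<I} - good \<subseteq> (\<Union>j<I. \<Union>l<n j. B j l)"
  proof
    fix i assume "i \<in> {..<I} - good"
    then obtain j where "j < I" "n i < n j" "f i \<in> outer_boundary G (V (n i)) (V (n j)) #> f j"
      using not_good_in_outer_boundary by blast
    then show "i \<in> (\<Union>j<I. \<Union>l<n j. B j l)" using \<open>i \<in> {..<I} - good\<close> by (auto simp: B_def)
  qed
  then have "sum v ({..<I} - good) \<le> sum v (\<Union>j<I. \<Union>l<n j. B j l)"
    by (intro sum_mono2) (auto simp: v_def finite_B)
  also have "\<dots> \<le> (\<Sum>j<I. sum v (\<Union>l<n j. B j l))"
    by (rule sum_UN_le) (auto simp: v_def finite_B)
  also have "\<dots> \<le> (\<Sum>j<I. \<Sum>l<n j. sum v (B j l))"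
    by (intro sum_mono sum_UN_le) (auto simp: v_def finite_B)
  also have "\<dots> \<le> (\<Sum>j<I. \<Sum>l<n j. real (card (outer_boundary G (V l) (V (n j)))) * real (card (V l)))"
  proof (intro sum_mono)
    fix j l assume "j \<in> {..<I}"
    have boundary: "outer_boundary G (V l) (V (n j)) \<subseteq> carrier G"
      "finite (outer_boundary G (V l) (V (n j)))"
      by (simp_all add: outer_boundary_subset_carrier finite_outer_boundary V_carrier finite_V)
    have "card (B j l) \<le> card (outer_boundary G (V l) (V (n j)) #> f j)"
      using boundary(2) by (intro card_inj_on_le[OF inj_on_subset[OF inj_on_f]])
        (auto simp: B_def finite_r_coset)
    also have "\<dots> = card (outer_boundary G (V l) (V (n j)))"
      using boundary(1) f_carrier \<open>j \<in> {..<I}\<close> by (simp add: card_r_coset)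
    finally have "real (card (B j l)) * real (card (V l))
        \<le> real (card (outer_boundary G (V l) (V (n j)))) * real (card (V l))"
      by (simp add: mult_right_mono)
    moreover have "sum v (B j l) = real (card (B j l)) * real (card (V l))"
      by (simp add: v_def B_def)
    ultimately show "sum v (B j l) \<le> real (card (outer_boundary G (V l) (V (n j)))) * real (card (V l))"
      by simp
  qed
  also have "\<dots> \<le> (\<Sum>j<I. v j / 2)"
    using assms by (intro sum_mono) (simp add: v_def small_outer_boundaries_def)
  finally show ?thesis by (simp add: v_def sum_divide_distrib)
qed

lemma individually_filling_good_le_card_Union:
  assumes "\<And>k. individually_filling G C (V k)"
  shows "C * (\<Sum>i\<in>good. real (card (V (n i)))) \<le> real (card (\<Union>i<I. V (n i) #> f i))"
proof -
  define level where "level m = {i \<in> good. n i = m}" for m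
  have finite_good: "finite good" by (simp add: good_def)
  have good_I: "i \<in> good \<Longrightarrow> i < I" for i by (simp add: good_def)
  have "(\<Sum>i\<in>good. real (card (V (n i)))) = (\<Sum>m\<in>n ` good. \<Sum>i\<in>level m. real (card (V (n i))))"
    unfolding level_def by (rule sum.group[symmetric]) (auto simp: finite_good)
  also have "\<dots> = (\<Sum>m\<in>n ` good. \<Sum>i\<in>level m. real (card (V m #> f i)))"
    by (intro sum.cong refl) (simp add: level_def card_r_coset V_carrier f_carrier good_I)
  finally have "C * (\<Sum>i\<in>good. real (card (V (n i))))
      = (\<Sum>m\<in>n ` good. C * (\<Sum>i\<in>level m. real (card (V m #> f i))))"
    by (simp add: sum_distrib_left)
  also have "\<dots> \<le> (\<Sum>m\<in>n ` good. real (card (\<Union>i\<in>level m. V m #> f i)))"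
  proof (intro sum_mono individually_filling_finite_index[OF assms])
    fix m i assume "i \<in> level m"
    then show "f i \<in> carrier G \<and> f i \<notin> (\<Union>j\<in>{j \<in> level m. j < i}. V m #> f j)"
      using f_carrier by (fastforce simp: level_def good_I dest: f_fresh)
  qed (simp add: level_def finite_good)
  also have "\<dots> = real (card (\<Union>m\<in>n ` good. \<Union>i\<in>level m. V m #> f i))"
  proof -
    have "(\<Union>i\<in>level m. V m #> f i) \<inter> (\<Union>i\<in>level m'. V m' #> f i) = {}" if "m \<noteq> m'" for m m'
      using that good_translates_disjoint by (fastforce simp: level_def)
    then show ?thesis
      using finite_good by (subst card_UN_disjoint) (auto simp: level_def finite_r_coset finite_V)
  qed
  also have "\<dots> \<le> real (card (\<Union>i<I. V (n i) #> f i))"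
  proof (intro of_nat_mono card_mono)
    show "(\<Union>m\<in>n ` good. \<Union>i\<in>level m. V m #> f i) \<subseteq> (\<Union>i<I. V (n i) #> f i)"
      by (auto simp: level_def) (metis good_I lessThan_iff)
  qed (simp add: finite_r_coset finite_V)
  finally show ?thesis .
qed

end

theorem filling_if_small_outer_boundaries:
  assumes "group G" "\<And>k. V k \<subseteq> carrier G" "\<And>k. individually_filling G C (V k)" "C > 0"
    and "small_outer_boundaries G V"
  shows "filling G V"
  unfolding filling_def
proof (intro conjI exI[of _ "C / 2"] allI impI)
  show "\<one>\<^bsub>G\<^esub> \<in> V k" for k using assms(3) by (simp add: individually_filling_def)
  show "C / 2 > 0" using assms(4) by simp
  fix I n f assume "incremental G V I n f"
  then interpret incremental_translates G V I n f
    using assms(1-3)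
    by (simp add: incremental_translates_def incremental_translates_axioms_def individually_filling_def)
  let ?v = "\<lambda>i. real (card (V (n i)))"
  have "(\<Sum>i<I. real (card (V (n i) #>\<^bsub>G\<^esub> f i))) = sum ?v {..<I}"
    by (intro sum.cong) (simp_all add: card_r_coset V_carrier f_carrier)
  moreover have "sum ?v {..<I} / 2 \<le> sum ?v good"
  proof -
    have "sum ?v {..<I} = sum ?v good + sum ?v ({..<I} - good)"
      by (subst sum.subset_diff[of good]) (auto simp: good_def)
    then show ?thesis using sum_card_not_good_le_half[OF assms(5)] by linarith
  qed
  then have "C / 2 * sum ?v {..<I} \<le> C * sum ?v good"
    using assms(4) by (simp add: mult_left_mono)
  ultimately show "C / 2 * (\<Sum>i<I. real (card (V (n i) #>\<^bsub>G\<^esub> f i)))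
      \<le> real (card (\<Union>i<I. V (n i) #>\<^bsub>G\<^esub> f i))"
    using individually_filling_good_le_card_Union[OF assms(3)] by simp
qed

theorem lemma2p2:
  fixes G :: "('a, 'b) monoid_scheme" and W :: "nat \<Rightarrow> 'a set" and C :: real
  assumes "group G" and "countable (carrier G)" and "amenable_group G"
    and "\<And>n. finite (W n)" and "\<And>n. W n \<subseteq> carrier G" and "\<And>n. \<one>\<^bsub>G\<^esub> \<in> W n"
    and "incseq W"
    and "folner_seq G W"
    and "C > 0" and "\<And>n. individually_filling G C (W n)"
  shows "\<exists>\<sigma>. strict_mono \<sigma> \<and> filling G (W \<circ> \<sigma>)"
proof -
  \<comment> \<open>Countability and amenability are implied by the given Folner sequence, and finiteness
    of \<open>W n\<close> and \<open>\<one> \<in> W n\<close> are part of individual filling.\<close>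
  interpret group G by (rule assms(1))
  obtain \<sigma> where mono: "strict_mono \<sigma>" and small: "small_outer_boundaries G (W \<circ> \<sigma>)"
    using folner_subseq_small_outer_boundaries[OF assms(8,7)] .
  have "filling G (W \<circ> \<sigma>)"
    using assms(1,5,9,10) small by (intro filling_if_small_outer_boundaries) simp_all
  with mono show ?thesis by blast
qed

end
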